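(* Let $G=(V,E)$ be a 3-connected, transient, simple planar graph with bounded vertex degree and locally finite dual that is circle packed in $\mathbb{H}^2$, and let $\mathcal{A}$ be a nonempty proper closed subset of $\partial\mathbb{H}^2$. If $f\in\mathbf{HD}(G)$ and $f\in\mathcal{R}_{\mathcal{A}}$, then for almost every singly infinite path $(\gamma(n))_{n\ge0}$ with $\lim_{n\to\infty}d_m(\gamma(n),z)=0$ for some $z\in\mathcal A$, we have $\lim_{n\to\infty}f(\gamma(n))=0$.
   Context: Circle packing: vertices are the Euclidean centers of circles of a packing of the unit disk with tangency graph $G$, $r_v$ the radius; $m(e)=r_u+r_v$; $d_m$ its path metric; topological notions near $\partial\mathbb{H}^2$ with respect to $d_m$ (in its completion). Conductances $C:E\to(0,\infty)$. A function $F$ is harmonic if $F(v)=\sum_{e=(v,w)}C(e)F(w)/\sum_{e\ni v}C(e)$, Dirichlet if $\sum_{e=(u,v)}C(e)(F(u)-F(v))^2<\infty$; $\mathbf D(G)$, $\mathbf{HD}(G)$ are the Dirichlet and harmonic Dirichlet functions. With the norm $\|u\|=\sqrt{\mathcal E(\nabla u)+u(b_0)^2}$ ($b_0$ a fixed vertex), $\mathcal R_{\mathcal A}=\mathbf{HD}(G)\cap\overline{\mathcal T}$ where $\overline{\mathcal T}$ is the closure of the set of $f\in\mathbf D(G)$ such that every $z\in\mathcal A$ has an open neighborhood $U_z$ with $\mathrm{supp}f\cap U_z=\emptyset$. A family of paths is null if some $q:E\to(0,\infty)$ with $\sum_eC(e)q(e)^2<\infty$ gives each of its paths infinite $q$-length;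 "almost every path" means outside a null subfamily. *)

theory Defs
  imports "HOL-Analysis.Analysis" "HOL-Library.Extended_Real"
begin

text \<open>Graphs: vertices are the elements of a type 'v, adjacency is a relation E.
  Edges are unordered; sums over edges are taken over ordered pairs and halved.\<close>

definition sym_irrefl :: "('v \<Rightarrow> 'v \<Rightarrow> bool) \<Rightarrow> bool" where
  "sym_irrefl E \<longleftrightarrow> (\<forall>u v. E u v \<longrightarrow> E v u) \<and> (\<forall>v. \<not> E v v)"

definition walk_list :: "('v \<Rightarrow> 'v \<Rightarrow> bool) \<Rightarrow> 'v list \<Rightarrow> bool" where
  "walk_list E p \<longleftrightarrow> p \<noteq> [] \<and> (\<forall>i. Suc i < length p \<longrightarrow> E (p!i) (p!Suc i))"

definition connected_in :: "('v \<Rightarrow> 'v \<Rightarrow> bool) \<Rightarrow> 'v set \<Rightarrow> bool" where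
  "connected_in E S \<longleftrightarrow>
     (\<forall>u\<in>S. \<forall>v\<in>S. \<exists>p. walk_list E p \<and> hd p = u \<and> last p = v \<and> set p \<subseteq> S)"

definition three_connected :: "('v \<Rightarrow> 'v \<Rightarrow> bool) \<Rightarrow> bool" where
  "three_connected E \<longleftrightarrow> (\<exists>S::'v set. finite S \<and> card S \<ge> 4) \<and>
     (\<forall>X::'v set. finite X \<and> card X \<le> 2 \<longrightarrow> connected_in E (UNIV - X))"

definition bounded_degree :: "('v \<Rightarrow> 'v \<Rightarrow> bool) \<Rightarrow> bool" where
  "bounded_degree E \<longleftrightarrow> (\<exists>M::nat. \<forall>v. finite {w. E v w} \<and> card {w. E v w} \<le> M)"

definition conductance :: "('v \<Rightarrow> 'v \<Rightarrow> real) \<Rightarrow> ('v \<Rightarrow> 'v \<Rightarrow> bool) \<Rightarrow> bool" where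
  "conductance C E \<longleftrightarrow> (\<forall>u v. E u v \<longrightarrow> C u v > 0 \<and> C u v = C v u)"

definition energy :: "('v \<Rightarrow> 'v \<Rightarrow> real) \<Rightarrow> ('v \<Rightarrow> 'v \<Rightarrow> bool) \<Rightarrow> ('v \<Rightarrow> real) \<Rightarrow> ennreal" where
  "energy C E F = (\<Sum>\<^sub>\<infinity>(u,v)\<in>{(u,v). E u v}. ennreal (C u v * (F u - F v)^2)) / 2"

definition dirichlet :: "('v \<Rightarrow> 'v \<Rightarrow> real) \<Rightarrow> ('v \<Rightarrow> 'v \<Rightarrow> bool) \<Rightarrow> ('v \<Rightarrow> real) \<Rightarrow> bool" where
  "dirichlet C E F \<longleftrightarrow> energy C E F < top"

definition harmonic :: "('v \<Rightarrow> 'v \<Rightarrow> real) \<Rightarrow> ('v \<Rightarrow> 'v \<Rightarrow> bool) \<Rightarrow> ('v \<Rightarrow> real) \<Rightarrow> bool" where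
  "harmonic C E F \<longleftrightarrow>
     (\<forall>v. F v = (\<Sum>w\<in>{w. E v w}. C v w * F w) / (\<Sum>w\<in>{w. E v w}. C v w))"

definition HD :: "('v \<Rightarrow> 'v \<Rightarrow> real) \<Rightarrow> ('v \<Rightarrow> 'v \<Rightarrow> bool) \<Rightarrow> ('v \<Rightarrow> real) set" where
  "HD C E = {F. harmonic C E F \<and> dirichlet C E F}"

definition dnorm :: "('v \<Rightarrow> 'v \<Rightarrow> real) \<Rightarrow> ('v \<Rightarrow> 'v \<Rightarrow> bool) \<Rightarrow> 'v \<Rightarrow> ('v \<Rightarrow> real) \<Rightarrow> real" where
  "dnorm C E b0 F = sqrt (enn2real (energy C E F) + (F b0)^2)"

text \<open>Transience of the network (G,C): the capacity of b0 is positive.\<close>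
definition transient :: "('v \<Rightarrow> 'v \<Rightarrow> real) \<Rightarrow> ('v \<Rightarrow> 'v \<Rightarrow> bool) \<Rightarrow> 'v \<Rightarrow> bool" where
  "transient C E b0 \<longleftrightarrow> (\<exists>\<delta>>0. \<forall>F. finite {v. F v \<noteq> 0} \<and> F b0 = 1 \<longrightarrow> energy C E F \<ge> ennreal \<delta>)"

definition edge_set :: "('v \<Rightarrow> 'v \<Rightarrow> bool) \<Rightarrow> ('v \<Rightarrow> complex) \<Rightarrow> complex set" where
  "edge_set E c = \<Union>{closed_segment (c u) (c v) | u v. E u v}"

text \<open>Circle packing of the unit disk (carrier = the whole disk) with tangency graph E.\<close>
definition circle_packing_disk ::
  "('v \<Rightarrow> 'v \<Rightarrow> bool) \<Rightarrow> ('v \<Rightarrow> complex) \<Rightarrow> ('v \<Rightarrow> real) \<Rightarrow> bool" where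
  "circle_packing_disk E c r \<longleftrightarrow>
     (\<forall>v. r v > 0 \<and> cball (c v) (r v) \<subseteq> ball 0 1) \<and>
     (\<forall>u v. u \<noteq> v \<longrightarrow> ball (c u) (r u) \<inter> ball (c v) (r v) = {}) \<and>
     (\<forall>u v. E u v \<longleftrightarrow> u \<noteq> v \<and> dist (c u) (c v) = r u + r v) \<and>
     (\<forall>K. compact K \<and> K \<subseteq> ball 0 1 \<longrightarrow> finite {v. cball (c v) (r v) \<inter> K \<noteq> {}}) \<and>
     (\<forall>F\<in>components (ball 0 1 - edge_set E c). compact (closure F) \<and> closure F \<subseteq> ball 0 1)"

definition locally_finite_dual :: "('v \<Rightarrow> 'v \<Rightarrow> bool) \<Rightarrow> ('v \<Rightarrow> complex) \<Rightarrow> bool" where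
  "locally_finite_dual E c \<longleftrightarrow>
     (\<forall>F\<in>components (ball 0 1 - edge_set E c). \<exists>S. finite S \<and> S \<subseteq> {(u,v). E u v} \<and>
        frontier F \<subseteq> \<Union>{closed_segment (c u) (c v) | u v. (u,v) \<in> S})"

definition path_len :: "('v \<Rightarrow> real) \<Rightarrow> 'v list \<Rightarrow> real" where
  "path_len r p = (\<Sum>i<length p - 1. r (p!i) + r (p!Suc i))"

definition dm :: "('v \<Rightarrow> 'v \<Rightarrow> bool) \<Rightarrow> ('v \<Rightarrow> real) \<Rightarrow> 'v \<Rightarrow> 'v \<Rightarrow> real" where
  "dm E r u v = Inf {path_len r p | p. walk_list E p \<and> hd p = u \<and> last p = v}"

definition dm_cauchy :: "('v \<Rightarrow> 'v \<Rightarrow> bool) \<Rightarrow> ('v \<Rightarrow> real) \<Rightarrow> (nat \<Rightarrow> 'v) \<Rightarrow> bool" where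
  "dm_cauchy E r x \<longleftrightarrow> (\<forall>\<epsilon>>0. \<exists>N. \<forall>m\<ge>N. \<forall>n\<ge>N. dm E r (x m) (x n) < \<epsilon>)"

text \<open>Distance, in the completion of (V,d_m), from a vertex to the boundary point z:
  a point z of the unit circle is the limit of those d_m-Cauchy sequences whose
  centers converge (Euclidean) to z.\<close>
definition dm_bd :: "('v \<Rightarrow> 'v \<Rightarrow> bool) \<Rightarrow> ('v \<Rightarrow> complex) \<Rightarrow> ('v \<Rightarrow> real) \<Rightarrow> 'v \<Rightarrow> complex \<Rightarrow> ereal" where
  "dm_bd E c r v z = Inf {ereal l | l. \<exists>x. dm_cauchy E r x \<and> ((\<lambda>n. c (x n)) \<longlonglongrightarrow> z) \<and>
                                        ((\<lambda>n. dm E r v (x n)) \<longlonglongrightarrow> l)}"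

definition away_from ::
  "('v \<Rightarrow> 'v \<Rightarrow> bool) \<Rightarrow> ('v \<Rightarrow> complex) \<Rightarrow> ('v \<Rightarrow> real) \<Rightarrow> complex set \<Rightarrow> ('v \<Rightarrow> real) \<Rightarrow> bool" where
  "away_from E c r A f \<longleftrightarrow> (\<forall>z\<in>A. \<exists>\<epsilon>>0. \<forall>v. dm_bd E c r v z < ereal \<epsilon> \<longrightarrow> f v = 0)"

definition R_A ::
  "('v \<Rightarrow> 'v \<Rightarrow> real) \<Rightarrow> ('v \<Rightarrow> 'v \<Rightarrow> bool) \<Rightarrow> ('v \<Rightarrow> complex) \<Rightarrow> ('v \<Rightarrow> real) \<Rightarrow> 'v \<Rightarrow>
   complex set \<Rightarrow> ('v \<Rightarrow> real) set" where
  "R_A C E c r b0 A = HD C E \<inter>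
     {f. dirichlet C E f \<and> (\<forall>\<epsilon>>0. \<exists>g. dirichlet C E g \<and> away_from E c r A g \<and>
                                       dnorm C E b0 (\<lambda>v. f v - g v) < \<epsilon>)}"

definition inf_path :: "('v \<Rightarrow> 'v \<Rightarrow> bool) \<Rightarrow> (nat \<Rightarrow> 'v) \<Rightarrow> bool" where
  "inf_path E \<gamma> \<longleftrightarrow> inj \<gamma> \<and> (\<forall>n. E (\<gamma> n) (\<gamma> (Suc n)))"

definition null_family ::
  "('v \<Rightarrow> 'v \<Rightarrow> real) \<Rightarrow> ('v \<Rightarrow> 'v \<Rightarrow> bool) \<Rightarrow> (nat \<Rightarrow> 'v) set \<Rightarrow> bool" where
  "null_family C E P \<longleftrightarrow> (\<exists>q. (\<forall>u v. E u v \<longrightarrow> q u v > 0 \<and> q u v = q v u) \<and>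
     (\<Sum>\<^sub>\<infinity>(u,v)\<in>{(u,v). E u v}. ennreal (C u v * (q u v)^2)) < top \<and>
     (\<forall>\<gamma>\<in>P. \<not> summable (\<lambda>n. q (\<gamma> n) (\<gamma> (Suc n)))))"

end

theory Submission
  imports Defs
begin

(* Choose g_k vanishing near A with dnorm (f - g_k) < 4^-k and put d_k = f - g_k, so that d_k has
   energy below 16^-k and |d_k b0| < 4^-k.  The edge weight q with
   C q^2 = (sum over k of 4^k C (d_k u - d_k v)^2) + (a small positive summable term)
   has finite energy and bounds |d_k u - d_k v| by 2^-k q(u,v) on every edge.  Along a path of
   finite q-length, telescoping from b0 gives |d_k| <= B 2^-k with B independent of k; as g_k
   vanishes eventually along a path converging to a point of A, f tends to 0 along it.  Hence the
   exceptional paths all have infinite q-length.  Besides f in R_A and the conductances, the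
   argument only uses that the graph is symmetric, connected and has countably many vertices. *)

lemma sum_le_infsum_ennreal:
  fixes f :: "'a \<Rightarrow> ennreal"
  assumes "finite F" "F \<subseteq> A"
  shows "sum f F \<le> infsum f A"
  by (subst nonneg_infsum_complete) (use assms in \<open>auto intro!: SUP_upper\<close>)

lemma infsum_add_ennreal:
  fixes f g :: "'a \<Rightarrow> ennreal"
  shows "(\<Sum>\<^sub>\<infinity>x\<in>A. f x + g x) = infsum f A + infsum g A"
  by (rule infsum_add) (simp_all add: nonneg_summable_on_complete)

lemma infsum_edges_eq_twice_energy:
  "(\<Sum>\<^sub>\<infinity>(u,v)\<in>{(u,v). E u v}. ennreal (C u v * (F u - F v)^2)) = 2 * energy C E F"
proof -
  have "2 * x / 2 = x" for x :: ennreal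
    by (subst mult.commute, rule ennreal_mult_divide_eq) simp_all
  then show ?thesis
    unfolding energy_def by (simp add: ennreal_times_divide)
qed

lemma dirichlet_iff_infsum_edges_finite:
  "dirichlet C E F \<longleftrightarrow> (\<Sum>\<^sub>\<infinity>(u,v)\<in>{(u,v). E u v}. ennreal (C u v * (F u - F v)^2)) < top"
  unfolding dirichlet_def infsum_edges_eq_twice_energy by (auto simp: ennreal_mult_less_top)

lemma sum_edges_le_of_energy_le:
  assumes "conductance C E" "0 \<le> B" "energy C E F \<le> ennreal B" "finite S" "S \<subseteq> {(u,v). E u v}"
  shows "(\<Sum>(u,v)\<in>S. C u v * (F u - F v)^2) \<le> 2 * B"
proof -
  have nonneg: "0 \<le> C u v * (F u - F v)^2" if "(u,v) \<in> S" for u v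
    using that assms(1,5) unfolding conductance_def by (fastforce intro: less_imp_le)
  have "ennreal (\<Sum>(u,v)\<in>S. C u v * (F u - F v)^2) = (\<Sum>(u,v)\<in>S. ennreal (C u v * (F u - F v)^2))"
    using nonneg by (subst sum_ennreal[symmetric]) (auto simp: case_prod_beta)
  also have "\<dots> \<le> 2 * energy C E F"
    unfolding infsum_edges_eq_twice_energy[symmetric] by (rule sum_le_infsum_ennreal[OF assms(4,5)])
  also have "\<dots> \<le> ennreal (2 * B)"
    using assms(2,3) by (simp add: ennreal_mult' mult_left_mono)
  finally show ?thesis
    using assms(2) by simp
qed

lemma power2_diff_le_twice_sum_squares:
  fixes x y :: real
  shows "(x - y)^2 \<le> 2 * x^2 + 2 * y^2"
  using zero_le_power2[of "x + y"] by (simp add: power2_diff power2_sum)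

lemma dirichlet_diff:
  assumes "conductance C E" "dirichlet C E f" "dirichlet C E g"
  shows "dirichlet C E (\<lambda>v. f v - g v)"
proof -
  let ?P = "{(u,v). E u v}"
  define a where "a u v = ennreal (C u v * (f u - f v)^2) + ennreal (C u v * (g u - g v)^2)" for u v
  have edge_le: "ennreal (C u v * ((f u - g u) - (f v - g v))^2) \<le> a u v + a u v" if "E u v" for u v
  proof -
    have "0 < C u v" using assms(1) that unfolding conductance_def by blast
    have "((f u - g u) - (f v - g v))^2 = ((f u - f v) - (g u - g v))^2"
      by (simp add: algebra_simps)
    also have "\<dots> \<le> 2 * (f u - f v)^2 + 2 * (g u - g v)^2"
      by (rule power2_diff_le_twice_sum_squares)
    finally have "C u v * ((f u - g u) - (f v - g v))^2
        \<le> C u v * (2 * (f u - f v)^2 + 2 * (g u - g v)^2)"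
      using \<open>0 < C u v\<close> by (simp add: mult_left_mono)
    also have "\<dots> = 2 * (C u v * (f u - f v)^2 + C u v * (g u - g v)^2)"
      by (simp add: algebra_simps)
    also have "ennreal \<dots> = a u v + a u v"
    proof -
      have "0 \<le> C u v * (f u - f v)^2" "0 \<le> C u v * (g u - g v)^2"
        using \<open>0 < C u v\<close> by simp_all
      then show ?thesis
        unfolding a_def by (simp only: mult_2 ennreal_plus add_nonneg_nonneg)
    qed
    finally show ?thesis by (simp add: ennreal_leI)
  qed
  have "(\<Sum>\<^sub>\<infinity>(u,v)\<in>?P. a u v)
      = (\<Sum>\<^sub>\<infinity>(u,v)\<in>?P. ennreal (C u v * (f u - f v)^2)) + (\<Sum>\<^sub>\<infinity>(u,v)\<in>?P. ennreal (C u v * (g u - g v)^2))"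
    unfolding a_def case_prod_unfold by (rule infsum_add_ennreal)
  then have a_finite: "(\<Sum>\<^sub>\<infinity>(u,v)\<in>?P. a u v) < top"
    using assms(2,3) unfolding dirichlet_iff_infsum_edges_finite by (simp add: ennreal_add_less_top)
  have "(\<Sum>\<^sub>\<infinity>(u,v)\<in>?P. ennreal (C u v * ((f u - g u) - (f v - g v))^2))
      \<le> (\<Sum>\<^sub>\<infinity>(u,v)\<in>?P. a u v + a u v)"
    using edge_le by (intro infsum_mono) (auto intro: nonneg_summable_on_complete)
  also have "\<dots> = (\<Sum>\<^sub>\<infinity>(u,v)\<in>?P. a u v) + (\<Sum>\<^sub>\<infinity>(u,v)\<in>?P. a u v)"
    unfolding case_prod_unfold by (rule infsum_add_ennreal)
  also have "\<dots> < top"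
    using a_finite by (simp add: ennreal_add_less_top)
  finally show ?thesis
    unfolding dirichlet_iff_infsum_edges_finite .
qed

lemma countable_vertices_of_circle_packing:
  fixes c :: "'v \<Rightarrow> complex"
  assumes "circle_packing_disk E c r"
  shows "countable (UNIV :: 'v set)"
proof -
  let ?B = "\<lambda>v::'v. ball (c v) (r v)"
  have r_pos: "\<And>v. 0 < r v" and disjoint: "\<And>u v. u \<noteq> v \<Longrightarrow> ?B u \<inter> ?B v = {}"
    using assms unfolding circle_packing_disk_def by auto
  have "inj ?B"
  proof (rule injI)
    fix u v assume "?B u = ?B v"
    moreover have "c u \<in> ?B u" using r_pos[of u] by simp
    ultimately show "u = v" using disjoint[of u v] by blast
  qed
  moreover have "countable (range ?B)"
    by (rule countable_disjoint_open_subsets) (auto simp: pairwise_def disjnt_def intro!: disjoint simp del: mem_ball)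
  ultimately show ?thesis
    using countable_image_inj_on by blast
qed

lemma countable_positive_summable_weight:
  assumes "countable S"
  obtains w :: "'a \<Rightarrow> real" where "\<And>x. 0 < w x" and "(\<Sum>\<^sub>\<infinity>x\<in>S. ennreal (w x)) \<le> 2"
proof
  let ?n = "to_nat_on S"
  show "0 < (1/2::real) ^ ?n x" for x
    by simp
  show "(\<Sum>\<^sub>\<infinity>x\<in>S. ennreal ((1/2::real) ^ ?n x)) \<le> 2"
  proof (rule infsum_le_finite_sums)
    fix F assume F: "finite F" "F \<subseteq> S"
    have "(\<Sum>x\<in>F. (1/2::real) ^ ?n x) = (\<Sum>j\<in>?n ` F. (1/2) ^ j)"
      using inj_on_subset[OF inj_on_to_nat_on[OF assms] F(2)] by (simp add: sum.reindex)
    also have "\<dots> \<le> (\<Sum>j. (1/2) ^ j)"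
      using F(1) by (intro sum_le_suminf summable_geometric) auto
    also have "\<dots> = 2"
      using suminf_geometric[of "1/2 :: real"] by simp
    finally show "(\<Sum>x\<in>F. ennreal ((1/2) ^ ?n x)) \<le> 2"
      using ennreal_leI[of _ 2] by simp
  qed (simp add: nonneg_summable_on_complete)
qed

lemma sum_scaled_edge_energies_le:
  assumes "conductance C E" "\<And>k. energy C E (d k) \<le> ennreal ((1/16)^k)"
    and "finite S" "S \<subseteq> {(u,v). E u v}"
  shows "(\<Sum>(u,v)\<in>S. 4^k * (C u v * (d k u - d k v)^2)) \<le> 2 * (1/4)^k"
proof -
  have "(\<Sum>(u,v)\<in>S. 4^k * (C u v * (d k u - d k v)^2)) = 4^k * (\<Sum>(u,v)\<in>S. C u v * (d k u - d k v)^2)"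
    by (simp add: sum_distrib_left case_prod_beta)
  also have "\<dots> \<le> 4^k * (2 * (1/16)^k)"
    using sum_edges_le_of_energy_le[OF assms(1) _ assms(2) assms(3,4)] by (intro mult_left_mono) auto
  also have "\<dots> = 2 * (1/4)^k"
    by (simp flip: power_mult_distrib)
  finally show ?thesis .
qed

lemma summable_scaled_edge_energy:
  assumes "conductance C E" "\<And>k. energy C E (d k) \<le> ennreal ((1/16)^k)" "E u v"
  shows "summable (\<lambda>k. 4^k * (C u v * (d k u - d k v)^2))"
proof (rule summable_comparison_test')
  show "summable (\<lambda>k. 2 * (1/4::real)^k)"
    by (intro summable_mult summable_geometric) simp
  have "0 < C u v"
    using assms(1,3) unfolding conductance_def by blast
  then show "norm (4^k * (C u v * (d k u - d k v)^2)) \<le> 2 * (1/4)^k" for k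
    using sum_scaled_edge_energies_le[OF assms(1,2), of "{(u,v)}" k] assms(3) by simp
qed

lemma infsum_scaled_edge_energies_finite:
  assumes "conductance C E" "\<And>k. energy C E (d k) \<le> ennreal ((1/16)^k)"
  shows "(\<Sum>\<^sub>\<infinity>(u,v)\<in>{(u,v). E u v}. ennreal (\<Sum>k. 4^k * (C u v * (d k u - d k v)^2))) < top"
proof -
  define a where "a k e = (case e of (u,v) \<Rightarrow> 4^k * (C u v * (d k u - d k v)^2))" for k e
  have a_nonneg: "0 \<le> a k e" if "e \<in> {(u,v). E u v}" for k e
    using that assms(1) unfolding a_def conductance_def by (fastforce intro: less_imp_le)
  have summable_a: "summable (\<lambda>k. a k e)" if "e \<in> {(u,v). E u v}" for e
    using that summable_scaled_edge_energy[OF assms] unfolding a_def by auto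
  have "(\<Sum>\<^sub>\<infinity>e\<in>{(u,v). E u v}. ennreal (\<Sum>k. a k e)) \<le> ennreal (\<Sum>k. 2 * (1/4::real)^k)"
  proof (rule infsum_le_finite_sums)
    fix F assume F: "finite F" "F \<subseteq> {(u,v). E u v}"
    have "(\<Sum>e\<in>F. ennreal (\<Sum>k. a k e)) = ennreal (\<Sum>e\<in>F. \<Sum>k. a k e)"
      using F a_nonneg summable_a by (intro sum_ennreal suminf_nonneg) auto
    also have "(\<Sum>e\<in>F. \<Sum>k. a k e) = (\<Sum>k. \<Sum>e\<in>F. a k e)"
      using F summable_a by (intro suminf_sum[symmetric]) auto
    also have "\<dots> \<le> (\<Sum>k. 2 * (1/4)^k)"
    proof (rule suminf_le)
      show "(\<Sum>e\<in>F. a k e) \<le> 2 * (1/4)^k" for k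
        using sum_scaled_edge_energies_le[OF assms F] unfolding a_def by (simp add: case_prod_beta)
      show "summable (\<lambda>k. \<Sum>e\<in>F. a k e)"
        using F summable_a by (intro summable_sum) auto
      show "summable (\<lambda>k. 2 * (1/4::real)^k)"
        by (intro summable_mult summable_geometric) simp
    qed
    finally show "(\<Sum>e\<in>F. ennreal (\<Sum>k. a k e)) \<le> ennreal (\<Sum>k. 2 * (1/4)^k)"
      by (simp add: ennreal_leI)
  qed (simp add: nonneg_summable_on_complete)
  then show ?thesis
    unfolding a_def case_prod_unfold by (rule le_less_trans) simp
qed

lemma symmetric_positive_summable_edge_weight:
  fixes E :: "'v \<Rightarrow> 'v \<Rightarrow> bool"
  assumes E_sym: "\<And>u v. E u v \<Longrightarrow> E v u" and "countable (UNIV :: 'v set)"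
  obtains h :: "'v \<Rightarrow> 'v \<Rightarrow> real" where "\<And>u v. 0 < h u v" and "\<And>u v. h u v = h v u"
    and "(\<Sum>\<^sub>\<infinity>(u,v)\<in>{(u,v). E u v}. ennreal (h u v)) < top"
proof -
  let ?P = "{(u,v). E u v}"
  have "countable ((UNIV :: 'v set) \<times> (UNIV :: 'v set))"
    using assms(2) by (intro countable_SIGMA) auto
  then have "countable ?P"
    by (rule countable_subset[rotated]) auto
  then obtain w where w_pos: "\<And>e. 0 < w e" and w_sum: "(\<Sum>\<^sub>\<infinity>e\<in>?P. ennreal (w e)) \<le> 2"
    using countable_positive_summable_weight by blast
  have "prod.swap ` ?P = ?P"
    using E_sym by auto
  then have "(\<Sum>\<^sub>\<infinity>e\<in>?P. ennreal (w (prod.swap e))) = (\<Sum>\<^sub>\<infinity>e\<in>?P. ennreal (w e))"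
    using infsum_reindex[of prod.swap ?P "\<lambda>e. ennreal (w e)"] by (simp add: comp_def)
  then have "(\<Sum>\<^sub>\<infinity>(u,v)\<in>?P. ennreal (w (u,v) + w (v,u)))
      = (\<Sum>\<^sub>\<infinity>e\<in>?P. ennreal (w e)) + (\<Sum>\<^sub>\<infinity>e\<in>?P. ennreal (w e))"
    unfolding case_prod_unfold using w_pos
    by (simp add: ennreal_plus less_imp_le infsum_add_ennreal prod.swap_def)
  also have "\<dots> < top"
    using le_less_trans[OF w_sum] by (simp add: ennreal_add_less_top)
  finally show ?thesis
    using that[of "\<lambda>u v. w (u,v) + w (v,u)"] w_pos by (simp add: add_pos_pos add.commute)
qed

lemma dominating_edge_weight:
  fixes Q :: "'v \<Rightarrow> 'v \<Rightarrow> real"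
  assumes "conductance C E" and "\<And>u v. E u v \<Longrightarrow> E v u" and "countable (UNIV :: 'v set)"
    and Q_nonneg: "\<And>u v. E u v \<Longrightarrow> 0 \<le> Q u v" and Q_sym: "\<And>u v. E u v \<Longrightarrow> Q u v = Q v u"
    and Q_finite: "(\<Sum>\<^sub>\<infinity>(u,v)\<in>{(u,v). E u v}. ennreal (Q u v)) < top"
  obtains q where "\<And>u v. E u v \<Longrightarrow> 0 < q u v \<and> q u v = q v u"
    and "(\<Sum>\<^sub>\<infinity>(u,v)\<in>{(u,v). E u v}. ennreal (C u v * (q u v)^2)) < top"
    and "\<And>u v. E u v \<Longrightarrow> Q u v \<le> C u v * (q u v)^2"
proof -
  let ?P = "{(u,v). E u v}"
  have C_pos: "0 < C u v" and C_sym: "C u v = C v u" if "E u v" for u v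
    using assms(1) that unfolding conductance_def by auto
  \<comment> \<open>h only makes q strictly positive, as required of a witness for a null family\<close>
  obtain h where h_pos: "\<And>u v. 0 < h u v" and h_sym: "\<And>u v. h u v = h v u"
    and h_finite: "(\<Sum>\<^sub>\<infinity>(u,v)\<in>?P. ennreal (h u v)) < top"
    using symmetric_positive_summable_edge_weight[of E, OF assms(2,3)] by blast
  define q where "q u v = sqrt ((Q u v + h u v) / C u v)" for u v
  have Cq: "C u v * (q u v)^2 = Q u v + h u v" if "E u v" for u v
  proof -
    have "0 \<le> (Q u v + h u v) / C u v"
      using C_pos[OF that] Q_nonneg[OF that] h_pos[of u v] by simp
    then show ?thesis
      unfolding q_def using C_pos[OF that] by simp
  qed
  show ?thesis
  proof
    show "0 < q u v \<and> q u v = q v u" if "E u v" for u v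
      unfolding q_def using C_pos[OF that] C_sym[OF that] Q_nonneg[OF that] Q_sym[OF that] h_pos h_sym
      by (simp add: add_nonneg_pos)
    show "Q u v \<le> C u v * (q u v)^2" if "E u v" for u v
      using Cq[OF that] h_pos[of u v] by simp
    have "(\<Sum>\<^sub>\<infinity>(u,v)\<in>?P. ennreal (C u v * (q u v)^2)) = (\<Sum>\<^sub>\<infinity>(u,v)\<in>?P. ennreal (Q u v) + ennreal (h u v))"
      using Cq Q_nonneg h_pos by (intro infsum_cong) (auto simp: ennreal_plus[OF _ less_imp_le])
    also have "\<dots> = (\<Sum>\<^sub>\<infinity>(u,v)\<in>?P. ennreal (Q u v)) + (\<Sum>\<^sub>\<infinity>(u,v)\<in>?P. ennreal (h u v))"
      unfolding case_prod_unfold by (rule infsum_add_ennreal)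
    also have "\<dots> < top"
      using Q_finite h_finite by (simp add: ennreal_add_less_top)
    finally show "(\<Sum>\<^sub>\<infinity>(u,v)\<in>?P. ennreal (C u v * (q u v)^2)) < top" .
  qed
qed

lemma abs_diff_le_sum_along_walk:
  fixes F :: "'v \<Rightarrow> real"
  assumes "\<And>i. i < m \<Longrightarrow> E (x i) (x (Suc i))" and "\<And>u v. E u v \<Longrightarrow> \<bar>F u - F v\<bar> \<le> q u v"
  shows "\<bar>F (x m) - F (x 0)\<bar> \<le> (\<Sum>i<m. q (x i) (x (Suc i)))"
  using assms(1)
proof (induction m)
  case 0
  then show ?case by simp
next
  case (Suc m)
  have "\<bar>F (x (Suc m)) - F (x m)\<bar> \<le> q (x m) (x (Suc m))"
    using assms(2)[OF Suc.prems[of m]] by (simp add: abs_minus_commute)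
  moreover have "\<bar>F (x m) - F (x 0)\<bar> \<le> (\<Sum>i<m. q (x i) (x (Suc i)))"
    using Suc by simp
  ultimately show ?case by simp
qed

lemma abs_le_along_path_of_finite_length:
  fixes F :: "'v \<Rightarrow> real"
  assumes lip: "\<And>u v. E u v \<Longrightarrow> \<bar>F u - F v\<bar> \<le> q u v"
    and p: "walk_list E p" "hd p = b" "last p = \<gamma> 0"
    and \<gamma>: "\<And>n. E (\<gamma> n) (\<gamma> (Suc n))" "summable (\<lambda>n. q (\<gamma> n) (\<gamma> (Suc n)))"
  shows "\<bar>F (\<gamma> N)\<bar> \<le> \<bar>F b\<bar> + (\<Sum>i<length p - 1. q (p!i) (p!Suc i)) + (\<Sum>n. q (\<gamma> n) (\<gamma> (Suc n)))"
proof -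
  have "p \<noteq> []"
    using p(1) unfolding walk_list_def by simp
  then have "p!0 = b" "p!(length p - 1) = \<gamma> 0"
    using p(2,3) by (simp_all add: hd_conv_nth last_conv_nth)
  moreover have "\<bar>F (p!(length p - 1)) - F (p!0)\<bar> \<le> (\<Sum>i<length p - 1. q (p!i) (p!Suc i))"
    using p(1) unfolding walk_list_def by (intro abs_diff_le_sum_along_walk[OF _ lip]) auto
  ultimately have to_start: "\<bar>F (\<gamma> 0) - F b\<bar> \<le> (\<Sum>i<length p - 1. q (p!i) (p!Suc i))"
    by simp
  have "\<bar>F (\<gamma> N) - F (\<gamma> 0)\<bar> \<le> (\<Sum>n<N. q (\<gamma> n) (\<gamma> (Suc n)))"
    using \<gamma>(1) by (rule abs_diff_le_sum_along_walk[OF _ lip])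
  also have "\<dots> \<le> (\<Sum>n. q (\<gamma> n) (\<gamma> (Suc n)))"
    using \<gamma>(2) order_trans[OF abs_ge_zero lip[OF \<gamma>(1)]] by (intro sum_le_suminf) auto
  finally show ?thesis
    using to_start by linarith
qed

lemma null_family_mono:
  assumes "null_family C E P" "P' \<subseteq> P"
  shows "null_family C E P'"
  using assms unfolding null_family_def by blast

lemma edge_weight_bounding_scaled_differences:
  fixes d :: "nat \<Rightarrow> 'v \<Rightarrow> real"
  assumes "conductance C E" "\<And>u v. E u v \<Longrightarrow> E v u" "countable (UNIV :: 'v set)"
    and energy_le: "\<And>k. energy C E (d k) \<le> ennreal ((1/16)^k)"
  obtains q where "\<And>u v. E u v \<Longrightarrow> 0 < q u v \<and> q u v = q v u"
    and "(\<Sum>\<^sub>\<infinity>(u,v)\<in>{(u,v). E u v}. ennreal (C u v * (q u v)^2)) < top"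
    and "\<And>k u v. E u v \<Longrightarrow> \<bar>2^k * d k u - 2^k * d k v\<bar> \<le> q u v"
proof -
  have C_pos: "0 < C u v" and C_sym: "C u v = C v u" if "E u v" for u v
    using assms(1) that unfolding conductance_def by auto
  define Q where "Q u v = (\<Sum>k. 4^k * (C u v * (d k u - d k v)^2))" for u v
  have Q_ge: "4^k * (C u v * (d k u - d k v)^2) \<le> Q u v" if "E u v" for k u v
    unfolding Q_def using C_pos[OF that]
    by (intro sum_le_suminf[of _ "{k}", simplified] summable_scaled_edge_energy[OF assms(1) energy_le that]) auto
  have Q_nonneg: "0 \<le> Q u v" if "E u v" for u v
    unfolding Q_def using C_pos[OF that]
    by (intro suminf_nonneg summable_scaled_edge_energy[OF assms(1) energy_le that]) simp
  have Q_sym: "Q u v = Q v u" if "E u v" for u v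
    unfolding Q_def using C_sym[OF that] by (simp add: power2_commute)
  obtain q where q_pos_sym: "\<And>u v. E u v \<Longrightarrow> 0 < q u v \<and> q u v = q v u"
    and q_finite: "(\<Sum>\<^sub>\<infinity>(u,v)\<in>{(u,v). E u v}. ennreal (C u v * (q u v)^2)) < top"
    and Q_le: "\<And>u v. E u v \<Longrightarrow> Q u v \<le> C u v * (q u v)^2"
    using dominating_edge_weight[of C E, OF assms(1-3) Q_nonneg Q_sym
        infsum_scaled_edge_energies_finite[OF assms(1) energy_le, folded Q_def]] by blast
  have "\<bar>2^k * d k u - 2^k * d k v\<bar> \<le> q u v" if "E u v" for k u v
  proof -
    have "(4::real)^k = 2^k * 2^k"
      by (simp flip: power_mult_distrib)
    then have "C u v * (2^k * d k u - 2^k * d k v)^2 = 4^k * (C u v * (d k u - d k v)^2)"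
      by (simp add: power2_eq_square algebra_simps)
    also have "\<dots> \<le> C u v * (q u v)^2"
      using Q_ge[OF that, of k] Q_le[OF that] by linarith
    finally have "(2^k * d k u - 2^k * d k v)^2 \<le> (q u v)^2"
      using C_pos[OF that] by simp
    then show ?thesis
      using q_pos_sym[OF that] abs_le_square_iff[of _ "q u v"] by simp
  qed
  with q_pos_sym q_finite show ?thesis
    using that by blast
qed

lemma null_family_of_geometrically_small_energies:
  fixes d :: "nat \<Rightarrow> 'v \<Rightarrow> real"
  assumes "conductance C E" "\<And>u v. E u v \<Longrightarrow> E v u" "countable (UNIV :: 'v set)" "connected_in E UNIV"
    and "\<And>k. energy C E (d k) \<le> ennreal ((1/16)^k)" and at_b: "\<And>k. \<bar>d k b\<bar> \<le> (1/2)^k"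
  shows "null_family C E {\<gamma>. (\<forall>n. E (\<gamma> n) (\<gamma> (Suc n))) \<and> \<not> (\<exists>B. \<forall>k n. \<bar>d k (\<gamma> n)\<bar> \<le> B / 2^k)}"
proof -
  obtain q where q_pos_sym: "\<And>u v. E u v \<Longrightarrow> 0 < q u v \<and> q u v = q v u"
    and q_finite: "(\<Sum>\<^sub>\<infinity>(u,v)\<in>{(u,v). E u v}. ennreal (C u v * (q u v)^2)) < top"
    and d_lip: "\<And>k u v. E u v \<Longrightarrow> \<bar>2^k * d k u - 2^k * d k v\<bar> \<le> q u v"
    using edge_weight_bounding_scaled_differences[of C E, OF assms(1-3,5)] by blast
  show ?thesis
    unfolding null_family_def
  proof (intro exI conjI ballI allI impI)
    show "0 < q u v" "q u v = q v u" if "E u v" for u v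
      using q_pos_sym[OF that] by auto
    show "(\<Sum>\<^sub>\<infinity>(u,v)\<in>{(u,v). E u v}. ennreal (C u v * (q u v)^2)) < top"
      by (fact q_finite)
  next
    fix \<gamma> assume "\<gamma> \<in> {\<gamma>. (\<forall>n. E (\<gamma> n) (\<gamma> (Suc n))) \<and> \<not> (\<exists>B. \<forall>k n. \<bar>d k (\<gamma> n)\<bar> \<le> B / 2^k)}"
    then have \<gamma>: "\<And>n. E (\<gamma> n) (\<gamma> (Suc n))" and unbounded: "\<not> (\<exists>B. \<forall>k n. \<bar>d k (\<gamma> n)\<bar> \<le> B / 2^k)"
      by auto
    show "\<not> summable (\<lambda>n. q (\<gamma> n) (\<gamma> (Suc n)))"
    proof
      assume summable: "summable (\<lambda>n. q (\<gamma> n) (\<gamma> (Suc n)))"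
      obtain p where p: "walk_list E p" "hd p = b" "last p = \<gamma> 0"
        using assms(4) unfolding connected_in_def by blast
      define B where "B = 1 + (\<Sum>i<length p - 1. q (p!i) (p!Suc i)) + (\<Sum>n. q (\<gamma> n) (\<gamma> (Suc n)))"
      have "\<bar>d k (\<gamma> n)\<bar> \<le> B / 2^k" for k n
      proof -
        have "\<bar>2^k * d k b\<bar> \<le> 1"
          using at_b[of k] by (simp add: abs_mult power_one_over field_simps)
        then have "\<bar>2^k * d k (\<gamma> n)\<bar> \<le> B"
          using abs_le_along_path_of_finite_length[where F = "\<lambda>v. 2^k * d k v", OF d_lip p \<gamma> summable, of n]
          unfolding B_def by linarith
        then show ?thesis
          by (simp add: abs_mult field_simps)
      qed
      then show False
        using unbounded by blast
    qed
  qed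
qed

lemma energy_le_and_abs_less_of_dnorm_less:
  assumes "dirichlet C E F" "dnorm C E b F < e"
  shows "energy C E F \<le> ennreal (e^2)" and "\<bar>F b\<bar> < e"
proof -
  define X where "X = enn2real (energy C E F) + (F b)^2"
  have "0 \<le> X"
    unfolding X_def by simp
  then have "X = (sqrt X)^2" "0 \<le> sqrt X" "sqrt X < e"
    using assms(2) unfolding dnorm_def X_def by simp_all
  then have "X < e^2" "0 \<le> e"
    by (metis power_strict_mono zero_less_numeral, linarith)
  then have energy_less: "enn2real (energy C E F) < e^2" and "(F b)^2 < e^2"
    unfolding X_def using zero_le_power2[of "F b"] enn2real_nonneg[of "energy C E F"] by linarith+
  have "energy C E F = ennreal (enn2real (energy C E F))"
    using assms(1) unfolding dirichlet_def by simp
  also have "\<dots> \<le> ennreal (e^2)"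
    using energy_less by (simp add: ennreal_leI)
  finally show "energy C E F \<le> ennreal (e^2)" .
  show "\<bar>F b\<bar> < e"
    using \<open>(F b)^2 < e^2\<close> \<open>0 \<le> e\<close> by (simp add: power2_less_imp_less[of "\<bar>F b\<bar>"])
qed

lemma away_from_eventually_zero:
  assumes "away_from E c r A g" "z \<in> A" "(\<lambda>n. dm_bd E c r (\<gamma> n) z) \<longlonglongrightarrow> 0"
  shows "eventually (\<lambda>n. g (\<gamma> n) = 0) sequentially"
proof -
  obtain \<epsilon> where "0 < \<epsilon>" and vanish: "\<And>v. dm_bd E c r v z < ereal \<epsilon> \<Longrightarrow> g v = 0"
    using assms(1,2) unfolding away_from_def by blast
  then have "eventually (\<lambda>n. dm_bd E c r (\<gamma> n) z < ereal \<epsilon>) sequentially"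
    using order_tendstoD(2)[OF assms(3)] by simp
  then show ?thesis
    by (rule eventually_mono) (rule vanish)
qed

lemma tendsto_zero_of_geometric_approximation:
  fixes x :: "nat \<Rightarrow> real" and y :: "nat \<Rightarrow> nat \<Rightarrow> real"
  assumes close: "\<And>k n. \<bar>x n - y k n\<bar> \<le> B / 2^k"
    and vanish: "\<And>k. eventually (\<lambda>n. y k n = 0) sequentially"
  shows "x \<longlonglongrightarrow> 0"
  unfolding tendsto_iff
proof (intro allI impI)
  fix e :: real assume "0 < e"
  then have "eventually (\<lambda>k. B / 2^k < e) sequentially"
    using order_tendstoD(2)[OF LIMSEQ_divide_realpow_zero[of 2 B]] by simp
  then obtain k where "B / 2^k < e"
    using eventually_sequentially by auto
  show "eventually (\<lambda>n. dist (x n) 0 < e) sequentially"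
    using vanish[of k]
  proof (rule eventually_mono)
    fix n assume "y k n = 0"
    then show "dist (x n) 0 < e"
      using close[of n k] \<open>B / 2^k < e\<close> by simp
  qed
qed

lemma geometric_approximants_of_R_A:
  assumes "conductance C E" "f \<in> R_A C E c r b A"
  obtains g where "\<And>k. away_from E c r A (g k)"
    and "\<And>k. energy C E (\<lambda>v. f v - g k v) \<le> ennreal ((1/16)^k)"
    and "\<And>k. \<bar>f b - g k b\<bar> \<le> (1/2)^k"
proof -
  have "\<forall>k::nat. \<exists>g. dirichlet C E g \<and> away_from E c r A g \<and> dnorm C E b (\<lambda>v. f v - g v) < (1/4)^k"
    using assms(2) unfolding R_A_def by auto
  then obtain g where g: "\<And>k. dirichlet C E (g k)" "\<And>k. away_from E c r A (g k)"
    "\<And>k. dnorm C E b (\<lambda>v. f v - g k v) < (1/4)^k"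
    by metis
  have "dirichlet C E (\<lambda>v. f v - g k v)" for k
    using assms g(1) unfolding R_A_def by (intro dirichlet_diff) auto
  note dnorm_bounds = energy_le_and_abs_less_of_dnorm_less[OF this g(3)]
  show ?thesis
  proof
    show "away_from E c r A (g k)" for k
      by (fact g(2))
    have "((1/4::real)^k)^2 = (1/16)^k" for k
      by (simp add: power2_eq_square flip: power_mult_distrib)
    then show "energy C E (\<lambda>v. f v - g k v) \<le> ennreal ((1/16)^k)" for k
      using dnorm_bounds(1)[of k] by simp
    have "(1/4::real)^k \<le> (1/2)^k" for k
      by (simp add: power_mono)
    then show "\<bar>f b - g k b\<bar> \<le> (1/2)^k" for k
      using dnorm_bounds(2)[of k] by (meson less_imp_le order.trans)
  qed
qed

theorem corollary3p10:
  fixes E :: "'v \<Rightarrow> 'v \<Rightarrow> bool" and C :: "'v \<Rightarrow> 'v \<Rightarrow> real"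
    and c :: "'v \<Rightarrow> complex" and r :: "'v \<Rightarrow> real" and b0 :: 'v
    and A :: "complex set" and f :: "'v \<Rightarrow> real"
  assumes "sym_irrefl E" and "three_connected E" and "bounded_degree E"
    and "conductance C E" and "transient C E b0"
    and "circle_packing_disk E c r" and "locally_finite_dual E c"
    and "A \<noteq> {}" and "A \<subseteq> sphere 0 1" and "A \<noteq> sphere 0 1" and "closed A"
    and "f \<in> HD C E" and "f \<in> R_A C E c r b0 A"
  shows "null_family C E {\<gamma>. inf_path E \<gamma> \<and> (\<exists>z\<in>A. (\<lambda>n. dm_bd E c r (\<gamma> n) z) \<longlonglongrightarrow> 0)
                              \<and> \<not> ((\<lambda>n. f (\<gamma> n)) \<longlonglongrightarrow> 0)}"
proof -
  obtain g where away: "\<And>k. away_from E c r A (g k)"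
    and "\<And>k. energy C E (\<lambda>v. f v - g k v) \<le> ennreal ((1/16)^k)" "\<And>k. \<bar>f b0 - g k b0\<bar> \<le> (1/2)^k"
    using geometric_approximants_of_R_A[OF assms(4,13)] by blast
  moreover have "connected_in E UNIV"
    using assms(2) unfolding three_connected_def by (metis Diff_empty card.empty finite.emptyI zero_le)
  moreover have "E v u" if "E u v" for u v
    using assms(1) that unfolding sym_irrefl_def by blast
  ultimately have null: "null_family C E
      {\<gamma>. (\<forall>n. E (\<gamma> n) (\<gamma> (Suc n))) \<and> \<not> (\<exists>B. \<forall>k n. \<bar>f (\<gamma> n) - g k (\<gamma> n)\<bar> \<le> B / 2^k)}"
    using null_family_of_geometrically_small_energies[where d = "\<lambda>k v. f v - g k v", OF assms(4) _
        countable_vertices_of_circle_packing[OF assms(6)]] by blast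
  show ?thesis
  proof (rule null_family_mono[OF null], safe)
    fix \<gamma> z n assume "inf_path E \<gamma>"
    then show "E (\<gamma> n) (\<gamma> (Suc n))"
      unfolding inf_path_def by blast
  next
    fix \<gamma> z B
    assume not_to_zero: "\<not> (\<lambda>n. f (\<gamma> n)) \<longlonglongrightarrow> 0" and "z \<in> A"
      and to_z: "(\<lambda>n. dm_bd E c r (\<gamma> n) z) \<longlonglongrightarrow> 0" and bounded: "\<forall>k n. \<bar>f (\<gamma> n) - g k (\<gamma> n)\<bar> \<le> B / 2^k"
    have "(\<lambda>n. f (\<gamma> n)) \<longlonglongrightarrow> 0"
      using bounded away_from_eventually_zero[OF away \<open>z \<in> A\<close> to_z]
      by (intro tendsto_zero_of_geometric_approximation[where y = "\<lambda>k n. g k (\<gamma> n)"]) auto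
    then show False
      using not_to_zero by blast
  qed
qed

end
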